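(* Let $G$ be a finite group, $p$ a prime, and $n>0$ an integer with $\gcd(n,p)=1$. Then $P_e(G)\cong P_e(\mathbb{Z}_p\times\mathbb{Z}_p\times\mathbb{Z}_n)$ if and only if $G\cong \mathbb{Z}_p\times\mathbb{Z}_p\times\mathbb{Z}_n$.
   Context: All groups are finite. $\mathbb{Z}_k$ denotes the cyclic group of order $k$. For a group $X$, the enhanced power graph $P_e(X)$ is the simple graph with vertex set $X$ in which two distinct vertices $x,y$ are adjacent if and only if $\langle x,y\rangle$ is cyclic. *)

theory Defs
  imports "HOL-Algebra.Algebra"
begin

definition epg_adj :: "('a, 'b) monoid_scheme \<Rightarrow> 'a \<Rightarrow> 'a \<Rightarrow> bool" where
  "epg_adj G x y \<longleftrightarrow> x \<in> carrier G \<and> y \<in> carrier G \<and> x \<noteq> y \<and>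
     cyclic_group (subgroup_generated G {x, y})"

definition epg_iso :: "('a, 'b) monoid_scheme \<Rightarrow> ('c, 'd) monoid_scheme \<Rightarrow> bool" where
  "epg_iso G H \<longleftrightarrow> (\<exists>f. bij_betw f (carrier G) (carrier H) \<and>
     (\<forall>x\<in>carrier G. \<forall>y\<in>carrier G. epg_adj G x y \<longleftrightarrow> epg_adj H (f x) (f y)))"

definition Zppn :: "nat \<Rightarrow> nat \<Rightarrow> (int \<times> int \<times> int) monoid" where
  "Zppn p n = integer_mod_group p \<times>\<times> integer_mod_group p \<times>\<times> integer_mod_group n"

end

theory Submission
  imports Defs "HOL-Number_Theory.Number_Theory"
begin

text \<open>
  Two elements are adjacent in P_e(G) iff they lie in a common cyclic subgroup, so the closed
  neighbourhood N(x) of a vertex x is the union of the cyclic subgroups containing x. A graph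
  isomorphism preserves the number of universal vertices and the sizes of the other closed
  neighbourhoods. In Z_p x Z_p x Z_n the universal vertices are the n elements (0, 0, z), and
  every other closed neighbourhood is a line {(l x, l y, z')} with p n elements.

  Conversely, let G have order p^2 n with the same data. Every non-universal closed
  neighbourhood is a cyclic subgroup of order p n (generated by any of its elements of maximal
  order), two different ones meet exactly in the set D of universal vertices, and counting
  shows that there are at most p + 1 of them. If g0 and g1 generate two of them, then
  D = <g0> \<inter> <g1> = <g0^p> is central of order n, and a = g0^n, b = g1^n have order p with
  b \<notin> <a>. Should a and b not commute, Fermat's little theorem shows that b does not
  normalise <g0>, so <g0> has exactly the p conjugates b^-i <g0> b^i, none of which is <g1>;
  likewise <g1> has p conjugates. Two disjoint conjugacy classes of size p do not fit among
  p + 1 subgroups, so a and b commute, and (i, j, k) \<mapsto> a^i b^j (g0^p)^k is an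
  isomorphism from Z_p x Z_p x Z_n onto G.
\<close>

section \<open>Closed neighbourhoods in the enhanced power graph\<close>

definition epg_nbhd :: "('a, 'b) monoid_scheme \<Rightarrow> 'a \<Rightarrow> 'a set" where
  "epg_nbhd G x = {y \<in> carrier G. y = x \<or> epg_adj G x y}"

definition epg_universal :: "('a, 'b) monoid_scheme \<Rightarrow> 'a set" where
  "epg_universal G = {x \<in> carrier G. epg_nbhd G x = carrier G}"

lemma epg_nbhd_subset_carrier: "epg_nbhd G x \<subseteq> carrier G"
  unfolding epg_nbhd_def by blast

lemma epg_universal_subset_carrier: "epg_universal G \<subseteq> carrier G"
  unfolding epg_universal_def by blast

lemma epg_adj_sym: "epg_adj G x y \<Longrightarrow> epg_adj G y x"
  unfolding epg_adj_def by (auto simp: insert_commute)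

lemma epg_nbhd_sym: "x \<in> carrier G \<Longrightarrow> y \<in> epg_nbhd G x \<Longrightarrow> x \<in> epg_nbhd G y"
  unfolding epg_nbhd_def by (auto dest: epg_adj_sym)

lemma bij_betw_image_Collect:
  assumes "bij_betw f A B" and "\<And>y. y \<in> A \<Longrightarrow> P y \<longleftrightarrow> Q (f y)"
  shows "f ` {y \<in> A. P y} = {v \<in> B. Q v}"
  using assms by (auto simp: bij_betw_def)

lemma image_epg_nbhd:
  assumes f: "bij_betw f (carrier G) (carrier H)"
    and adj: "\<forall>x\<in>carrier G. \<forall>y\<in>carrier G. epg_adj G x y \<longleftrightarrow> epg_adj H (f x) (f y)"
    and x: "x \<in> carrier G"
  shows "f ` epg_nbhd G x = epg_nbhd H (f x)"
  unfolding epg_nbhd_def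
proof (rule bij_betw_image_Collect[OF f])
  show "y = x \<or> epg_adj G x y \<longleftrightarrow> f y = f x \<or> epg_adj H (f x) (f y)" if "y \<in> carrier G" for y
    using that x adj f by (auto simp: bij_betw_def inj_on_eq_iff)
qed

lemma image_epg_universal:
  assumes f: "bij_betw f (carrier G) (carrier H)"
    and adj: "\<forall>x\<in>carrier G. \<forall>y\<in>carrier G. epg_adj G x y \<longleftrightarrow> epg_adj H (f x) (f y)"
  shows "f ` epg_universal G = epg_universal H"
  unfolding epg_universal_def
proof (rule bij_betw_image_Collect[OF f])
  have inj: "inj_on f (carrier G)" and im: "f ` carrier G = carrier H"
    using f by (auto simp: bij_betw_def)
  show "epg_nbhd G x = carrier G \<longleftrightarrow> epg_nbhd H (f x) = carrier H" if "x \<in> carrier G" for x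
    using inj_on_image_eq_iff[OF inj epg_nbhd_subset_carrier subset_refl, of x]
    unfolding image_epg_nbhd[OF f adj that] im by simp
qed

lemma epg_iso_card_carrier: "epg_iso G H \<Longrightarrow> card (carrier G) = card (carrier H)"
  unfolding epg_iso_def using bij_betw_same_card by blast

lemma epg_iso_card_universal:
  "epg_iso G H \<Longrightarrow> card (epg_universal G) = card (epg_universal H)"
  unfolding epg_iso_def
  by (metis bij_betw_def card_image epg_universal_subset_carrier image_epg_universal inj_on_subset)

lemma epg_iso_card_nbhd:
  assumes "epg_iso G H" and x: "x \<in> carrier G - epg_universal G"
  obtains u where "u \<in> carrier H - epg_universal H" "card (epg_nbhd G x) = card (epg_nbhd H u)"
proof -
  obtain f where f: "bij_betw f (carrier G) (carrier H)"
    and adj: "\<forall>x\<in>carrier G. \<forall>y\<in>carrier G. epg_adj G x y \<longleftrightarrow> epg_adj H (f x) (f y)"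
    using assms(1) unfolding epg_iso_def by blast
  have inj: "inj_on f (carrier G)"
    using f by (simp add: bij_betw_def)
  have "f x \<in> carrier H - epg_universal H"
    using x f image_epg_universal[OF f adj] inj_on_image_mem_iff[OF inj _ epg_universal_subset_carrier]
    by (auto simp: bij_betw_def)
  moreover have "card (epg_nbhd G x) = card (epg_nbhd H (f x))"
    using image_epg_nbhd[OF f adj] x card_image[OF inj_on_subset[OF inj epg_nbhd_subset_carrier]]
    by (metis DiffD1)
  ultimately show ?thesis
    using that by blast
qed

lemma iso_imp_epg_iso:
  assumes G: "group G" and H: "group H" and "G \<cong> H"
  shows "epg_iso G H"
proof -
  obtain h where h: "h \<in> iso G H"
    using assms(3) unfolding is_iso_def by blast
  interpret group_hom G H h
    using G H h by (simp add: group_hom_def group_hom_axioms_def iso_def)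
  have bij: "bij_betw h (carrier G) (carrier H)"
    using h by (simp add: iso_def)
  have "epg_adj G x y \<longleftrightarrow> epg_adj H (h x) (h y)" if xy: "x \<in> carrier G" "y \<in> carrier G" for x y
  proof -
    have "h \<in> iso (subgroup_generated G {x, y}) (subgroup_generated H {h x, h y})"
      using iso_between_subgroups[OF h] xy by auto
    then have "cyclic_group (subgroup_generated G {x, y}) \<longleftrightarrow>
               cyclic_group (subgroup_generated H {h x, h y})"
      by (intro isomorphic_group_cyclicity) (auto simp: is_iso_def
          G.group_subgroup_generated H.group_subgroup_generated)
    moreover have "x = y \<longleftrightarrow> h x = h y"
      using bij xy by (auto simp: bij_betw_def inj_on_eq_iff)
    ultimately show ?thesis
      using xy unfolding epg_adj_def by auto
  qed
  then show ?thesis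
    unfolding epg_iso_def using bij by blast
qed

section \<open>Cyclic subgroups and conjugation\<close>

lemma fermat_little:
  fixes m p :: nat
  assumes "Factorial_Ring.prime p"
  shows "m ^ p mod p = m mod p"
proof (cases "p dvd m")
  case True
  then have "p dvd m ^ p"
    using assms prime_gt_0_nat dvd_power dvd_trans by blast
  then show ?thesis
    using True by simp
next
  case False
  have "[m * m ^ (p - 1) = m * 1] (mod p)"
    using fermat_theorem[OF assms False] by (rule cong_scalar_left)
  moreover have "m * m ^ (p - 1) = m ^ p"
    using assms prime_gt_0_nat by (metis Suc_diff_1 power_Suc)
  ultimately show ?thesis
    unfolding cong_def by simp
qed

context group
begin

lemma mem_generate_singleton_iff:
  assumes "finite (carrier G)" "w \<in> carrier G"
  shows "x \<in> generate G {w} \<longleftrightarrow> (\<exists>k::nat. x = w [^] k)"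
  using generate_pow_on_finite_carrier[OF assms] by blast

lemma generate_singleton_subset:
  assumes "w \<in> carrier G" "x \<in> generate G {w}"
  shows "generate G {x} \<subseteq> generate G {w}"
  using assms generate_subgroup_incl generate_is_subgroup by (metis empty_subsetI insert_subset)

lemma subgroup_of_cyclic_subgroup:
  assumes fin: "finite (carrier G)" and H: "subgroup H G" and w: "w \<in> carrier G"
    and sub: "H \<subseteq> generate G {w}"
  obtains z where "z \<in> carrier G" "H = generate G {z}"
proof -
  define P where "P d \<longleftrightarrow> 0 < d \<and> w [^] d \<in> H" for d :: nat
  have "P (ord w)"
    unfolding P_def using ord_ge_1[OF fin w] w subgroup.one_closed[OF H] by simp
  define d where "d = (LEAST d. P d)"
  have Pd: "P d" unfolding d_def by (rule LeastI, fact)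
  have dmin: "\<And>e. P e \<Longrightarrow> d \<le> e" unfolding d_def by (rule Least_le)
  define z where "z = w [^] d"
  have z: "z \<in> carrier G" "z \<in> H" using Pd w unfolding z_def P_def by auto
  have "H \<subseteq> generate G {z}"
  proof
    fix h assume "h \<in> H"
    then obtain k :: nat where k: "h = w [^] k"
      using sub mem_generate_singleton_iff[OF fin w] by blast
    define q r where "q = k div d" and "r = k mod d"
    have kqr: "k = d * q + r" unfolding q_def r_def by simp
    have "h = z [^] q \<otimes> w [^] r"
      using k kqr w unfolding z_def by (simp add: nat_pow_mult nat_pow_pow)
    then have "w [^] r = inv (z [^] q) \<otimes> h"
      using w z by (simp add: m_assoc[symmetric])
    moreover have "inv (z [^] q) \<in> H"
      using H z subgroup_int_pow_closed[OF H z(2), of "int q"]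
      by (simp add: subgroup.m_inv_closed int_pow_int)
    ultimately have "w [^] r \<in> H" using \<open>h \<in> H\<close> H subgroup.m_closed by fastforce
    moreover have "r < d" using Pd unfolding r_def P_def by simp
    ultimately have "r = 0" using dmin unfolding P_def by (meson leD neq0_conv)
    then have "h = z [^] q" using k kqr w unfolding z_def by (simp add: nat_pow_pow)
    then show "h \<in> generate G {z}" using mem_generate_singleton_iff[OF fin z(1)] by blast
  qed
  moreover have "generate G {z} \<subseteq> H"
    using z H generate_subgroup_incl by (metis empty_subsetI insert_subset)
  ultimately show ?thesis using that z by blast
qed

lemma cyclic_subgroup_generated_iff:
  assumes S: "S \<subseteq> carrier G"
  shows "cyclic_group (subgroup_generated G S) \<longleftrightarrow> (\<exists>z\<in>carrier G. generate G S = generate G {z})"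
proof -
  let ?H = "subgroup_generated G S"
  have cH: "carrier ?H = generate G S"
    using S by (simp add: carrier_subgroup_generated Int_absorb1)
  show ?thesis
  proof
    assume "cyclic_group ?H"
    then obtain z where z: "z \<in> carrier ?H" "carrier ?H = range (\<lambda>k::int. z [^]\<^bsub>?H\<^esub> k)"
      using group.cyclic_group[OF group_subgroup_generated] by blast
    have zG: "z \<in> carrier G"
      using z(1) carrier_subgroup_generated_subset by blast
    have "generate G S = generate G {z}"
      using z cH int_pow_subgroup_generated[OF z(1)] generate_pow[OF zG] by auto
    then show "\<exists>z\<in>carrier G. generate G S = generate G {z}"
      using zG by blast
  next
    assume "\<exists>z\<in>carrier G. generate G S = generate G {z}"
    then obtain z where z: "z \<in> carrier G" "generate G S = generate G {z}" by blast
    then have zH: "z \<in> carrier ?H"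
      using cH by (simp add: generate.incl)
    have "carrier ?H = range (\<lambda>k::int. z [^]\<^bsub>?H\<^esub> k)"
      using cH z int_pow_subgroup_generated[OF zH] generate_pow[OF z(1)] by auto
    then show "cyclic_group ?H"
      using group.cyclic_group[OF group_subgroup_generated] zH by blast
  qed
qed

lemma cyclic_subgroup_generated_pair_iff:
  assumes fin: "finite (carrier G)" and xy: "x \<in> carrier G" "y \<in> carrier G"
  shows "cyclic_group (subgroup_generated G {x, y}) \<longleftrightarrow>
         (\<exists>w\<in>carrier G. x \<in> generate G {w} \<and> y \<in> generate G {w})"
proof -
  have "{x, y} \<subseteq> carrier G"
    using xy by simp
  moreover have "(\<exists>z\<in>carrier G. generate G {x, y} = generate G {z}) \<longleftrightarrow>
    (\<exists>w\<in>carrier G. x \<in> generate G {w} \<and> y \<in> generate G {w})"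
  proof
    assume "\<exists>z\<in>carrier G. generate G {x, y} = generate G {z}"
    then show "\<exists>w\<in>carrier G. x \<in> generate G {w} \<and> y \<in> generate G {w}"
      by (metis generate.incl insertCI)
  next
    assume "\<exists>w\<in>carrier G. x \<in> generate G {w} \<and> y \<in> generate G {w}"
    then obtain w where w: "w \<in> carrier G" "x \<in> generate G {w}" "y \<in> generate G {w}" by blast
    then have "generate G {x, y} \<subseteq> generate G {w}"
      using generate_subgroup_incl generate_is_subgroup by (metis empty_subsetI insert_subset)
    then show "\<exists>z\<in>carrier G. generate G {x, y} = generate G {z}"
      using subgroup_of_cyclic_subgroup[OF fin generate_is_subgroup w(1)] xy by (metis empty_subsetI insert_subset)
  qed
  ultimately show ?thesis
    by (simp add: cyclic_subgroup_generated_iff)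
qed

lemma mem_epg_nbhd_iff:
  assumes fin: "finite (carrier G)" and x: "x \<in> carrier G"
  shows "y \<in> epg_nbhd G x \<longleftrightarrow>
    y \<in> carrier G \<and> (\<exists>w\<in>carrier G. x \<in> generate G {w} \<and> y \<in> generate G {w})"
  using x generate.incl[of x "{x}" G]
  by (auto simp: epg_nbhd_def epg_adj_def cyclic_subgroup_generated_pair_iff[OF fin])

lemma nat_pow_mod_ord:
  assumes x: "x \<in> carrier G"
  shows "x [^] (k::nat) = x [^] (k mod ord x)"
proof -
  have "k = ord x * (k div ord x) + k mod ord x"
    by simp
  then have "x [^] k = (x [^] ord x) [^] (k div ord x) \<otimes> x [^] (k mod ord x)"
    by (metis x nat_pow_mult nat_pow_pow nat_pow_closed)
  then show ?thesis
    using x by simp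
qed

lemma commute_in_generate_singleton:
  assumes "finite (carrier G)" "w \<in> carrier G" "x \<in> generate G {w}" "y \<in> generate G {w}"
  shows "x \<otimes> y = y \<otimes> x"
  using assms mem_generate_singleton_iff[OF assms(1,2)] by (auto simp: nat_pow_mult add.commute)

lemma ord_dvd_card_subgroup:
  assumes fin: "finite (carrier G)" and H: "subgroup H G" and d: "d \<in> H"
  shows "ord d dvd card H"
proof -
  let ?H = "subgroup_generated G H"
  have cH: "carrier ?H = H"
    using subgroup.carrier_subgroup_generated_subgroup[OF H] .
  have "generate G {d} \<subseteq> H"
    by (rule generate_subgroup_incl[OF _ H]) (use d in simp)
  moreover have "subgroup (generate G {d}) G"
    by (rule generate_is_subgroup) (use d subgroup.subset[OF H] in auto)
  ultimately have "subgroup (generate G {d}) ?H"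
    by (rule subgroup_of_subgroup_generated)
  then have "card (rcosets\<^bsub>?H\<^esub> generate G {d}) * card (generate G {d}) = order ?H"
    using group.lagrange[OF group_subgroup_generated] by blast
  then show ?thesis
    using generate_pow_card[of d] d subgroup.subset[OF H] unfolding order_def cH
    by (metis dvd_triv_right subsetD)
qed

lemma cancel_inv_left: "x \<in> carrier G \<Longrightarrow> y \<in> carrier G \<Longrightarrow> x \<otimes> (inv x \<otimes> y) = y"
  by (simp add: m_assoc[symmetric])

definition conj_set :: "'a \<Rightarrow> 'a set \<Rightarrow> 'a set" where
  "conj_set x S = (\<lambda>s. inv x \<otimes> s \<otimes> x) ` S"

definition conj_class :: "'a set \<Rightarrow> 'a set set" where
  "conj_class S = {conj_set x S | x. x \<in> carrier G}"

lemma conj_set_subset_carrier: "x \<in> carrier G \<Longrightarrow> S \<subseteq> carrier G \<Longrightarrow> conj_set x S \<subseteq> carrier G"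
  unfolding conj_set_def by auto

lemma card_conj_set: "x \<in> carrier G \<Longrightarrow> S \<subseteq> carrier G \<Longrightarrow> card (conj_set x S) = card S"
  unfolding conj_set_def by (rule card_image) (auto intro: inj_onI simp: subset_iff)

lemma conj_set_mult:
  assumes "x \<in> carrier G" "y \<in> carrier G" "S \<subseteq> carrier G"
  shows "conj_set (x \<otimes> y) S = conj_set y (conj_set x S)"
  unfolding conj_set_def image_image
  using assms by (intro image_cong) (auto simp: inv_mult_group m_assoc subset_iff)

lemma conj_set_one: "S \<subseteq> carrier G \<Longrightarrow> conj_set \<one> S = S"
  unfolding conj_set_def by (auto simp: subset_iff image_iff)

lemma conj_set_inv: "x \<in> carrier G \<Longrightarrow> S \<subseteq> carrier G \<Longrightarrow> conj_set (inv x) (conj_set x S) = S"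
  by (metis conj_set_mult conj_set_one inv_closed r_inv)

lemma conj_set_inv': "x \<in> carrier G \<Longrightarrow> S \<subseteq> carrier G \<Longrightarrow> conj_set x (conj_set (inv x) S) = S"
  using conj_set_inv[of "inv x" S] by simp

lemma conj_set_nat_pow:
  assumes "z \<in> carrier G" "S \<subseteq> carrier G" "conj_set z S = S"
  shows "conj_set (z [^] (k::nat)) S = S"
proof (induction k)
  case 0
  then show ?case using conj_set_one assms by simp
next
  case (Suc k)
  then show ?case
    using conj_set_mult[of "z [^] k" z S] assms by simp
qed

lemma conj_set_subgroup_self:
  assumes H: "subgroup H G" and m: "m \<in> H"
  shows "conj_set m H = H"
proof -
  have sub: "conj_set x H \<subseteq> H" if "x \<in> H" for x
    using that H unfolding conj_set_def by (auto intro: subgroup.m_closed subgroup.m_inv_closed)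
  have "H = conj_set m (conj_set (inv m) H)"
    using conj_set_inv' m subgroup.subset[OF H] by auto
  also have "\<dots> \<subseteq> conj_set m H"
    using sub[OF subgroup.m_inv_closed[OF H m]] unfolding conj_set_def by blast
  finally show ?thesis
    using sub[OF m] by blast
qed

lemma conj_set_eq_subgroup_imp_eq:
  assumes H: "subgroup H G" and y: "y \<in> H" and S: "S \<subseteq> carrier G" and eq: "conj_set y S = H"
  shows "S = H"
proof -
  have yG: "y \<in> carrier G"
    using y subgroup.subset[OF H] by blast
  have "S = conj_set (inv y) H"
    using conj_set_inv[OF yG S] eq by simp
  also have "\<dots> = H"
    using conj_set_subgroup_self[OF H subgroup.m_inv_closed[OF H y]] .
  finally show ?thesis .
qed

lemma conj_nat_pow:
  assumes x: "x \<in> carrier G" and w: "w \<in> carrier G"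
  shows "inv x \<otimes> w [^] (k::nat) \<otimes> x = (inv x \<otimes> w \<otimes> x) [^] k"
proof (induction k)
  case 0
  then show ?case using assms by simp
next
  case (Suc k)
  have "(inv x \<otimes> w [^] k \<otimes> x) \<otimes> (inv x \<otimes> w \<otimes> x) = inv x \<otimes> w [^] k \<otimes> (x \<otimes> inv x) \<otimes> w \<otimes> x"
    using x w by (simp add: m_assoc cancel_inv_left)
  also have "\<dots> = inv x \<otimes> w [^] Suc k \<otimes> x"
    using x w by (simp add: m_assoc)
  finally show ?case
    using Suc by simp
qed

lemma conj_set_generate:
  assumes fin: "finite (carrier G)" and x: "x \<in> carrier G" and w: "w \<in> carrier G"
  shows "conj_set x (generate G {w}) = generate G {inv x \<otimes> w \<otimes> x}"
proof -
  have "conj_set x (generate G {w}) = (\<lambda>k::nat. inv x \<otimes> w [^] k \<otimes> x) ` UNIV"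
    unfolding conj_set_def generate_pow_on_finite_carrier[OF fin w] by auto
  also have "\<dots> = (\<lambda>k::nat. (inv x \<otimes> w \<otimes> x) [^] k) ` UNIV"
    using conj_nat_pow[OF x w] by simp
  also have "\<dots> = generate G {inv x \<otimes> w \<otimes> x}"
    using generate_pow_on_finite_carrier[OF fin, of "inv x \<otimes> w \<otimes> x"] x w by auto
  finally show ?thesis .
qed

lemma mem_conj_class_if_meet:
  assumes "S \<in> conj_class A" "S \<in> conj_class B" "A \<subseteq> carrier G" "B \<subseteq> carrier G"
  shows "B \<in> conj_class A"
proof -
  obtain x where x: "x \<in> carrier G" "S = conj_set x B"
    using assms(2) unfolding conj_class_def by blast
  obtain z where z: "z \<in> carrier G" "S = conj_set z A"
    using assms(1) unfolding conj_class_def by blast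
  have "B = conj_set (inv x) (conj_set z A)"
    using conj_set_inv[OF x(1) assms(4)] x(2) z(2) by simp
  also have "\<dots> = conj_set (z \<otimes> inv x) A"
    using conj_set_mult[OF z(1) inv_closed[OF x(1)] assms(3)] by simp
  finally show ?thesis
    unfolding conj_class_def using x(1) z(1) by blast
qed

lemma card_conj_class_le_index:
  assumes fin: "finite (carrier G)" and H: "subgroup H G" and index: "card H * q = card (carrier G)"
  shows "card (conj_class H) \<le> q"
proof -
  have Hc: "H \<subseteq> carrier G" using H subgroup.subset by blast
  have "card (rcosets H) * card H = card (carrier G)"
    using lagrange[OF H] unfolding order_def .
  moreover have "card H > 0"
    using H fin subgroup.one_closed[OF H] by (metis card_gt_0_iff finite_subset Hc empty_iff)
  ultimately have rc: "card (rcosets H) = q"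
    using index by (metis mult.commute mult_right_cancel not_gr0)
  \<comment> \<open>conj_set x H only depends on the coset H #> x\<close>
  define F where "F C = conj_set (SOME x. x \<in> C) H" for C
  have "conj_class H \<subseteq> F ` (rcosets H)"
  proof
    fix T assume "T \<in> conj_class H"
    then obtain x where x: "x \<in> carrier G" "T = conj_set x H"
      unfolding conj_class_def by blast
    have "x \<in> H #> x" using rcos_self[OF x(1) H] .
    then have "(SOME y. y \<in> H #> x) \<in> H #> x" by (rule someI)
    then obtain h where h: "h \<in> H" "(SOME y. y \<in> H #> x) = h \<otimes> x"
      unfolding r_coset_def by blast
    have "F (H #> x) = conj_set x (conj_set h H)"
      unfolding F_def h(2) using conj_set_mult h Hc x(1) by blast
    also have "\<dots> = T"
      using conj_set_subgroup_self[OF H h(1)] x by simp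
    finally show "T \<in> F ` (rcosets H)"
      using x(1) Hc by (force simp: rcosetsI)
  qed
  moreover have "finite (rcosets H)"
    using fin by (simp add: RCOSETS_def r_coset_def)
  ultimately have "card (conj_class H) \<le> card (F ` (rcosets H))"
    by (simp add: card_mono)
  also have "\<dots> \<le> card (rcosets H)"
    using fin by (simp add: RCOSETS_def card_image_le)
  finally show ?thesis using rc by simp
qed

lemma commute_if_conj_mem_generate:
  assumes fin: "finite (carrier G)" and p: "Factorial_Ring.prime p"
    and a: "a \<in> carrier G" "ord a = p" and y: "y \<in> carrier G" "y [^] p = \<one>"
    and conj: "inv y \<otimes> a \<otimes> y \<in> generate G {a}"
  shows "a \<otimes> y = y \<otimes> a"
proof -
  obtain m :: nat where m: "inv y \<otimes> a \<otimes> y = a [^] m"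
    using conj mem_generate_singleton_iff[OF fin a(1)] by blast
  have iter: "inv (y [^] i) \<otimes> a \<otimes> y [^] i = a [^] (m ^ i)" for i :: nat
  proof (induction i)
    case 0
    then show ?case using a by simp
  next
    case (Suc i)
    have "inv (y [^] Suc i) \<otimes> a \<otimes> y [^] Suc i = inv y \<otimes> (inv (y [^] i) \<otimes> a \<otimes> y [^] i) \<otimes> y"
      using y a by (simp add: inv_mult_group m_assoc)
    also have "\<dots> = (inv y \<otimes> a \<otimes> y) [^] (m ^ i)"
      using Suc conj_nat_pow[OF y(1) a(1)] by simp
    finally show ?case
      using m a by (simp add: nat_pow_pow)
  qed
  \<comment> \<open>y^p = 1 gives a = a^(m^p), and m^p = m mod p by Fermat\<close>
  have "a = a [^] (m ^ p mod p)"
    using iter[of p] y a nat_pow_mod_ord[OF a(1), of "m ^ p"] by simp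
  also have "\<dots> = a [^] m"
    using fermat_little[OF p] nat_pow_mod_ord[OF a(1), of m] a(2) by simp
  finally have "inv y \<otimes> a \<otimes> y = a"
    using m by simp
  then have "y \<otimes> (inv y \<otimes> (a \<otimes> y)) = y \<otimes> a"
    using y a by (simp add: m_assoc)
  then show ?thesis
    using y a by (simp add: cancel_inv_left)
qed

lemma mem_generate_pow_if_pow_eq_one:
  assumes fin: "finite (carrier G)" and g: "g \<in> carrier G" "ord g = m * d" and "d > 0"
    and x: "x \<in> generate G {g}" "x [^] d = \<one>"
  shows "x \<in> generate G {g [^] m}"
proof -
  obtain k :: nat where k: "x = g [^] k"
    using x(1) mem_generate_singleton_iff[OF fin g(1)] by blast
  then have "m * d dvd k * d"
    using x(2) g pow_eq_id[OF g(1)] by (simp add: nat_pow_pow)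
  then obtain j where "k = m * j"
    using \<open>d > 0\<close> by (auto elim: dvdE)
  then have "x = (g [^] m) [^] j"
    using k g by (simp add: nat_pow_pow)
  then show ?thesis
    using g mem_generate_singleton_iff[OF fin, of "g [^] m"] by blast
qed

lemma commute_pow_if_normalises:
  assumes fin: "finite (carrier G)" and p: "Factorial_Ring.prime p" and "n > 0"
    and g: "g \<in> carrier G" "ord g = p * n" and y: "y \<in> carrier G" "y [^] p = \<one>"
    and normal: "conj_set y (generate G {g}) = generate G {g}"
  shows "g [^] n \<otimes> y = y \<otimes> g [^] n"
proof (rule commute_if_conj_mem_generate[OF fin p _ _ y])
  let ?a = "g [^] n"
  show a: "?a \<in> carrier G" "ord ?a = p"
    using g ord_pow[OF g(1), of n] \<open>n > 0\<close> by auto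
  have "?a \<in> generate G {g}"
    using g mem_generate_singleton_iff[OF fin g(1)] by blast
  then have "inv y \<otimes> ?a \<otimes> y \<in> generate G {g}"
    using normal unfolding conj_set_def by blast
  moreover have "(inv y \<otimes> ?a \<otimes> y) [^] p = \<one>"
    using conj_nat_pow[OF y(1) a(1), of p] pow_ord_eq_1[OF a(1)] a y by simp
  ultimately show "inv y \<otimes> ?a \<otimes> y \<in> generate G {?a}"
    using mem_generate_pow_if_pow_eq_one[OF fin g(1), of n p] g p prime_gt_0_nat
    by (simp add: mult.commute)
qed

lemma conj_set_normalises_if_pow:
  assumes p: "Factorial_Ring.prime p" and y: "y \<in> carrier G" "ord y = p" and H: "H \<subseteq> carrier G"
    and k: "0 < k" "k < p" and normal: "conj_set (y [^] k) H = H"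
  shows "conj_set y H = H"
proof -
  obtain j where j: "[k * j = 1] (mod p)"
    using cong_unique_inverse_prime[OF p k] by blast
  have "(y [^] k) [^] j = y [^] (k * j mod p)"
    using y nat_pow_mod_ord[OF y(1), of "k * j"] by (simp add: nat_pow_pow)
  also have "k * j mod p = 1"
    using j prime_gt_1_nat[OF p] unfolding cong_def by simp
  finally show ?thesis
    using conj_set_nat_pow[OF _ H normal, of j] y by simp
qed

lemma inj_on_conj_set_prime_pows:
  assumes p: "Factorial_Ring.prime p" and y: "y \<in> carrier G" "ord y = p" and H: "H \<subseteq> carrier G"
    and not_normal: "conj_set y H \<noteq> H"
  shows "inj_on (\<lambda>i. conj_set (y [^] i) H) {..<p}"
proof -
  have distinct: "conj_set (y [^] i) H \<noteq> conj_set (y [^] j) H" if ij: "i < j" "j < p" for i j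
  proof
    assume eq: "conj_set (y [^] i) H = conj_set (y [^] j) H"
    have yi: "y [^] i \<in> carrier G" "y [^] (j - i) \<in> carrier G"
      using y by auto
    have "y [^] j = y [^] (j - i) \<otimes> y [^] i"
      using y ij by (simp add: nat_pow_mult)
    then have "conj_set (y [^] i) H = conj_set (y [^] i) (conj_set (y [^] (j - i)) H)"
      using eq conj_set_mult[OF yi(2) yi(1) H] by simp
    then have "conj_set (y [^] (j - i)) H = H"
      using conj_set_inv[OF yi(1)] conj_set_subset_carrier[OF yi(2) H] H by metis
    moreover have "0 < j - i" "j - i < p"
      using ij by auto
    ultimately show False
      using conj_set_normalises_if_pow[OF p y H] not_normal by blast
  qed
  show ?thesis
    by (rule inj_onI) (metis distinct lessThan_iff linorder_neqE_nat)
qed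

lemma conj_class_eq_conj_set_prime_pows:
  assumes fin: "finite (carrier G)" and p: "Factorial_Ring.prime p"
    and H: "subgroup H G" and index: "card H * p = card (carrier G)"
    and y: "y \<in> carrier G" "ord y = p" and not_normal: "conj_set y H \<noteq> H"
  shows "conj_class H = (\<lambda>i. conj_set (y [^] i) H) ` {..<p}"
    and "card ((\<lambda>i. conj_set (y [^] i) H) ` {..<p}) = p"
proof -
  let ?f = "\<lambda>i. conj_set (y [^] i) H"
  have Hc: "H \<subseteq> carrier G"
    using H subgroup.subset by blast
  have "inj_on ?f {..<p}"
    by (rule inj_on_conj_set_prime_pows[OF p y Hc not_normal])
  then show card: "card (?f ` {..<p}) = p"
    by (simp add: card_image)
  have sub: "?f ` {..<p} \<subseteq> conj_class H"
    unfolding conj_class_def using y by auto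
  have "conj_class H \<subseteq> Pow (carrier G)"
    unfolding conj_class_def using conj_set_subset_carrier Hc by blast
  then have "finite (conj_class H)"
    using fin by (meson finite_Pow_iff finite_subset)
  moreover have "card (conj_class H) \<le> p"
    using card_conj_class_le_index[OF fin H index] .
  ultimately show "conj_class H = ?f ` {..<p}"
    using card_seteq[OF _ sub] card by simp
qed

lemma nat_pow_commute:
  assumes "x \<in> carrier G" "y \<in> carrier G" "x \<otimes> y = y \<otimes> x"
  shows "x [^] (i::nat) \<otimes> y [^] (j::nat) = y [^] j \<otimes> x [^] i"
  using assms group_commutes_pow[of x y] group_commutes_pow[of y "x [^] i"] by simp

lemma mem_generate_nat_pow_prime_ord:
  assumes fin: "finite (carrier G)" and p: "Factorial_Ring.prime p"
    and x: "x \<in> carrier G" "ord x = p" and m: "\<not> p dvd m"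
  shows "x \<in> generate G {x [^] m}"
proof -
  have "coprime m p"
    using prime_imp_coprime[OF p m] by (simp add: coprime_commute)
  then obtain t where "[m * t = 1] (mod p)"
    using cong_solve_coprime_nat by auto
  then have "m * t mod p = 1"
    using prime_gt_1_nat[OF p] unfolding cong_def by simp
  then have "(x [^] m) [^] t = x"
    using x nat_pow_mod_ord[OF x(1), of "m * t"] by (simp add: nat_pow_pow)
  then show ?thesis
    using mem_generate_singleton_iff[OF fin, of "x [^] m"] x by (metis nat_pow_closed)
qed

lemma m_lcomm_if_commute:
  assumes "x \<in> carrier G" "y \<in> carrier G" "z \<in> carrier G" "x \<otimes> y = y \<otimes> x"
  shows "x \<otimes> (y \<otimes> z) = y \<otimes> (x \<otimes> z)"
  using assms by (metis m_assoc)

end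

section \<open>The enhanced power graph of Z_p x Z_p x Z_n\<close>

lemma nat_pow_DirProd: "pow (G \<times>\<times> H) (x, y) (k::nat) = (pow G x k, pow H y k)"
  by (induction k) simp_all

lemma group_Zppn: "group (Zppn p n)"
  unfolding Zppn_def by (intro DirProd_group group_integer_mod_group)

lemma nat_pow_Zppn:
  "pow (Zppn p n) (x, y, z) (k::nat) = ((int k * x) mod int p, (int k * y) mod int p, (int k * z) mod int n)"
  unfolding Zppn_def by (simp add: nat_pow_DirProd)

lemma mod_mult_inverse_cancel:
  fixes a b c w m :: int
  assumes "(b * a) mod m = 1"
  shows "((c * b) mod m * ((a * w) mod m)) mod m = (c * w) mod m"
proof -
  have "((c * b) mod m * ((a * w) mod m)) mod m = ((c * b) * (a * w)) mod m"
    by (rule mod_mult_eq)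
  also have "(c * b) * (a * w) = (c * w) * (b * a)"
    by (simp add: ac_simps)
  also have "((c * w) * (b * a)) mod m = ((c * w) * ((b * a) mod m)) mod m"
    by (rule mod_mult_right_eq[symmetric])
  finally show ?thesis
    using assms by simp
qed

locale Zppn_parameters =
  fixes p n :: nat
  assumes prime_p: "Factorial_Ring.prime p" and n_pos: "n > 0" and coprime_n_p: "coprime n p"
begin

abbreviation "K \<equiv> Zppn p n"

lemma p_ge_2: "p \<ge> 2"
  using prime_p prime_ge_2_nat by blast

lemma not_p_dvd_n: "\<not> p dvd n"
proof
  assume "p dvd n"
  then have "is_unit p"
    using coprime_common_divisor[OF coprime_n_p _ dvd_refl] by blast
  then show False
    using prime_p not_prime_unit by blast
qed

lemma carrier_Zppn: "carrier K = {0..<int p} \<times> {0..<int p} \<times> {0..<int n}"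
  unfolding Zppn_def using p_ge_2 n_pos by (simp add: carrier_integer_mod_group)

lemma finite_carrier_Zppn: "finite (carrier K)"
  unfolding carrier_Zppn by simp

lemma card_carrier_Zppn: "card (carrier K) = p * p * n"
  unfolding carrier_Zppn by (simp add: card_cartesian_product)

lemma mem_epg_nbhd_Zppn_iff:
  assumes "u \<in> carrier K"
  shows "v \<in> epg_nbhd K u \<longleftrightarrow>
    v \<in> carrier K \<and> (\<exists>w\<in>carrier K. \<exists>(k::nat) (l::nat). u = pow K w k \<and> v = pow K w l)"
proof -
  have "u \<in> generate K {w} \<and> v \<in> generate K {w} \<longleftrightarrow> (\<exists>(k::nat) (l::nat). u = pow K w k \<and> v = pow K w l)"
    if "w \<in> carrier K" for w
    using group.mem_generate_singleton_iff[OF group_Zppn finite_carrier_Zppn that] by simp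
  then show ?thesis
    unfolding group.mem_epg_nbhd_iff[OF group_Zppn finite_carrier_Zppn assms]
    by (simp cong: bex_cong)
qed

lemma chinese_remainder: "\<exists>k::nat. k mod p = a mod p \<and> k mod n = b mod n"
  using binary_chinese_remainder_nat[of p n a b] coprime_n_p
  by (auto simp: cong_def coprime_commute)

text \<open>For (x, y) \<noteq> (0, 0) the closed neighbourhood of (x, y, z) is the line
  {(l x, l y, z') | l \<in> Z_p, z' \<in> Z_n}: all of it lies in the cyclic group generated by
  (x, y, 1), and nothing else is a multiple of a common generator.\<close>

lemma line_subset_epg_nbhd:
  assumes u: "(x, y, z) \<in> carrier K" and l: "0 \<le> l" "l < int p" and z': "0 \<le> z'" "z' < int n"
  shows "((l * x) mod int p, (l * y) mod int p, z') \<in> epg_nbhd K (x, y, z)"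
proof -
  have r: "0 \<le> x" "x < int p" "0 \<le> y" "y < int p" "0 \<le> z" "z < int n"
    using u carrier_Zppn by auto
  define w where "w = (x, y, 1 mod int n)"
  have wc: "w \<in> carrier K"
    unfolding w_def carrier_Zppn using r n_pos by auto
  have pow_w: "pow K w k = ((int k * x) mod int p, (int k * y) mod int p, int k mod int n)" for k :: nat
    unfolding w_def nat_pow_Zppn by (simp add: mod_mult_right_eq)
  have mult_mod: "(int k * t) mod int m = (c * t) mod int m" if "int k mod int m = c" for k m c t
    using that mod_mult_left_eq[of "int k" "int m" t] by simp
  have pow_u: "pow K w k = (x, y, z)" if "k mod p = 1 mod p" "k mod n = nat z mod n" for k
  proof -
    have "int k mod int p = 1" "int k mod int n = z"
      using that r p_ge_2 by (simp_all flip: of_nat_mod)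
    then show ?thesis
      unfolding pow_w using mult_mod r by simp
  qed
  have pow_v: "pow K w k = ((l * x) mod int p, (l * y) mod int p, z')"
    if "k mod p = nat l mod p" "k mod n = nat z' mod n" for k
  proof -
    have "int k mod int p = l" "int k mod int n = z'"
      using that l z' by (simp_all flip: of_nat_mod)
    then show ?thesis
      unfolding pow_w using mult_mod by simp
  qed
  obtain k1 k2 :: nat
    where "pow K w k1 = (x, y, z)" "pow K w k2 = ((l * x) mod int p, (l * y) mod int p, z')"
    using chinese_remainder pow_u pow_v by meson
  moreover have "((l * x) mod int p, (l * y) mod int p, z') \<in> carrier K"
    unfolding carrier_Zppn using p_ge_2 z' by auto
  ultimately show ?thesis
    using mem_epg_nbhd_Zppn_iff[OF u] wc by metis
qed

lemma epg_nbhd_subset_line: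
  assumes u: "(x, y, z) \<in> carrier K" and nz: "x \<noteq> 0 \<or> y \<noteq> 0" and v: "v \<in> epg_nbhd K (x, y, z)"
  obtains l z' where "0 \<le> l" "l < int p" "0 \<le> z'" "z' < int n"
    and "v = ((l * x) mod int p, (l * y) mod int p, z')"
proof -
  obtain w and k1 k2 :: nat where "w \<in> carrier K" and k: "(x, y, z) = pow K w k1" "v = pow K w k2"
    using v mem_epg_nbhd_Zppn_iff[OF u] by blast
  moreover obtain w1 w2 w3 where "w = (w1, w2, w3)"
    by (cases w)
  ultimately have k1: "(x, y, z) = pow K (w1, w2, w3) k1" and k2: "v = pow K (w1, w2, w3) k2"
    by simp_all
  have x: "x = (int k1 * w1) mod int p" and y: "y = (int k1 * w2) mod int p"
    using k1 unfolding nat_pow_Zppn by auto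
  have "\<not> p dvd k1"
  proof
    assume "p dvd k1"
    then have "int p dvd int k1"
      by simp
    then show False
      using nz unfolding x y by auto
  qed
  then have "coprime k1 p"
    using prime_imp_coprime[OF prime_p] by (simp add: coprime_commute)
  then obtain i where "[k1 * i = 1] (mod p)"
    using cong_solve_coprime_nat by auto
  then have inverse: "(int i * int k1) mod int p = 1"
    using p_ge_2 unfolding cong_def by (simp add: mult.commute flip: of_nat_mod of_nat_mult)
  \<comment> \<open>the multiplier l = k2 / k1 in Z_p\<close>
  define l where "l = (int k2 * int i) mod int p"
  have cancel: "(l * ((int k1 * w) mod int p)) mod int p = (int k2 * w) mod int p" for w
    unfolding l_def by (rule mod_mult_inverse_cancel[OF inverse])
  have "0 \<le> l" "l < int p"
    unfolding l_def using p_ge_2 by auto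
  moreover have "0 \<le> (int k2 * w3) mod int n" "(int k2 * w3) mod int n < int n"
    using n_pos by auto
  moreover have "v = ((l * x) mod int p, (l * y) mod int p, (int k2 * w3) mod int n)"
    using k2 unfolding x y cancel nat_pow_Zppn .
  ultimately show ?thesis
    using that by blast
qed

lemma inj_on_line:
  assumes r: "0 \<le> x" "x < int p" "0 \<le> y" "y < int p" and nz: "x \<noteq> 0 \<or> y \<noteq> 0"
  shows "inj_on (\<lambda>(l, z'). ((l * x) mod int p, (l * y) mod int p, z')) ({0..<int p} \<times> {0..<int n})"
proof (rule inj_onI)
  fix a b
  assume "a \<in> {0..<int p} \<times> {0..<int n}" "b \<in> {0..<int p} \<times> {0..<int n}"
    and "(\<lambda>(l, z'). ((l * x) mod int p, (l * y) mod int p, z')) a =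
      (\<lambda>(l, z'). ((l * x) mod int p, (l * y) mod int p, z')) b"
  moreover obtain l z l' z' where ab: "a = (l, z)" "b = (l', z')"
    by (cases a, cases b)
  ultimately have l: "0 \<le> l" "l < int p" "0 \<le> l'" "l' < int p" and "z = z'"
    and eq: "(l * x) mod int p = (l' * x) mod int p" "(l * y) mod int p = (l' * y) mod int p"
    by auto
  have prime: "Factorial_Ring.prime (int p)"
    using prime_p by simp
  have dvd: "int p dvd l - l'" if t: "0 \<le> t" "t < int p" "t \<noteq> 0"
    and "(l * t) mod int p = (l' * t) mod int p" for t
  proof -
    have "int p dvd (l - l') * t"
      using that(4) by (simp add: mod_eq_dvd_iff left_diff_distrib)
    moreover have "\<not> int p dvd t"
      using t by (auto dest: zdvd_imp_le)
    ultimately show ?thesis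
      using prime by (simp add: prime_dvd_mult_iff)
  qed
  have "int p dvd l - l'"
  proof (cases "x = 0")
    case True
    then show ?thesis
      using nz r eq dvd[of y] by simp
  next
    case False
    then show ?thesis
      using r eq dvd[of x] by simp
  qed
  then have "l mod int p = l' mod int p"
    by (simp add: mod_eq_dvd_iff)
  then show "a = b"
    using l ab \<open>z = z'\<close> by simp
qed

lemma card_epg_nbhd_Zppn:
  assumes u: "(x, y, z) \<in> carrier K" and nz: "x \<noteq> 0 \<or> y \<noteq> 0"
  shows "card (epg_nbhd K (x, y, z)) = p * n"
proof -
  let ?f = "\<lambda>(l, z'). ((l * x) mod int p, (l * y) mod int p, z')"
  have r: "0 \<le> x" "x < int p" "0 \<le> y" "y < int p"
    using u carrier_Zppn by auto
  have "epg_nbhd K (x, y, z) = ?f ` ({0..<int p} \<times> {0..<int n})"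
  proof
    show "epg_nbhd K (x, y, z) \<subseteq> ?f ` ({0..<int p} \<times> {0..<int n})"
      by (auto elim!: epg_nbhd_subset_line[OF u nz] simp: image_iff)
    show "?f ` ({0..<int p} \<times> {0..<int n}) \<subseteq> epg_nbhd K (x, y, z)"
      using line_subset_epg_nbhd[OF u] by auto
  qed
  also have "card \<dots> = p * n"
    using card_image[OF inj_on_line[OF r nz]] by (simp add: card_cartesian_product)
  finally show ?thesis .
qed

lemma universal_Zppn:
  assumes z: "0 \<le> z" "z < int n"
  shows "(0, 0, z) \<in> epg_universal K"
proof -
  have "v \<in> epg_nbhd K (0, 0, z)" if v: "v \<in> carrier K" for v
  proof -
    obtain x y z' where "v = (x, y, z')"
      by (cases v)
    moreover have "0 \<le> (0::int)" "0 < int p"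
      using p_ge_2 by auto
    ultimately have "(0, 0, z) \<in> epg_nbhd K v"
      using line_subset_epg_nbhd[of x y z' 0 z] v z by simp
    then show ?thesis
      using epg_nbhd_sym[OF v] by blast
  qed
  then have "epg_nbhd K (0, 0, z) = carrier K"
    using epg_nbhd_subset_carrier[of K "(0, 0, z)"] by blast
  moreover have "(0, 0, z) \<in> carrier K"
    using z p_ge_2 unfolding carrier_Zppn by auto
  ultimately show ?thesis
    unfolding epg_universal_def by blast
qed

lemma epg_universal_Zppn: "epg_universal K = (\<lambda>z. (0::int, 0::int, z)) ` {0..<int n}"
proof
  show "(\<lambda>z. (0::int, 0::int, z)) ` {0..<int n} \<subseteq> epg_universal K"
    using universal_Zppn by auto
  show "epg_universal K \<subseteq> (\<lambda>z. (0::int, 0::int, z)) ` {0..<int n}"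
  proof
    fix u assume u: "u \<in> epg_universal K"
    obtain x y z where xyz: "u = (x, y, z)"
      by (cases u)
    then have uc: "(x, y, z) \<in> carrier K"
      using u epg_universal_subset_carrier[of K] by blast
    have "x = 0 \<and> y = 0"
    proof (rule ccontr)
      assume "\<not> (x = 0 \<and> y = 0)"
      then have "card (carrier K) = p * n"
        using card_epg_nbhd_Zppn[OF uc] u xyz unfolding epg_universal_def by simp
      moreover have "p * n < p * p * n"
        using p_ge_2 n_pos by simp
      ultimately show False
        using card_carrier_Zppn by simp
    qed
    then show "u \<in> (\<lambda>z. (0::int, 0::int, z)) ` {0..<int n}"
      using uc xyz unfolding carrier_Zppn by auto
  qed
qed

lemma card_epg_universal_Zppn: "card (epg_universal K) = n"
  unfolding epg_universal_Zppn by (simp add: card_image inj_on_def)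

lemma card_epg_nbhd_Zppn_non_universal:
  assumes u: "u \<in> carrier K - epg_universal K"
  shows "card (epg_nbhd K u) = p * n"
proof -
  obtain x y z where xyz: "u = (x, y, z)"
    by (cases u)
  have "x \<noteq> 0 \<or> y \<noteq> 0"
    using u unfolding xyz epg_universal_Zppn carrier_Zppn by auto
  then show ?thesis
    using card_epg_nbhd_Zppn u unfolding xyz by blast
qed

end

section \<open>Recognising Z_p x Z_p x Z_n\<close>

locale Zppn_order_group = group G + Zppn_parameters p n for G (structure) and p n +
  assumes finite_carrier: "finite (carrier G)" and card_carrier: "card (carrier G) = p * p * n"
begin

context
  fixes a b c
  assumes abc: "a \<in> carrier G" "b \<in> carrier G" "c \<in> carrier G"
    and ord_abc: "ord a = p" "ord b = p" "ord c = n"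
    and commute: "a \<otimes> b = b \<otimes> a" "c \<otimes> a = a \<otimes> c" "c \<otimes> b = b \<otimes> c"
begin

lemma hom_Zppn_triple: "(\<lambda>(i, j, k). a [^] nat i \<otimes> b [^] nat j \<otimes> c [^] nat k) \<in> hom K G"
proof (rule homI)
  fix u v
  assume "u \<in> carrier K" "v \<in> carrier K"
  moreover obtain i j k i' j' k' where uv: "u = (i, j, k)" "v = (i', j', k')"
    by (cases u, cases v)
  ultimately have r: "0 \<le> i" "0 \<le> j" "0 \<le> k" "0 \<le> i'" "0 \<le> j'" "0 \<le> k'"
    unfolding carrier_Zppn by auto
  have prod: "(i, j, k) \<otimes>\<^bsub>K\<^esub> (i', j', k') = ((i + i') mod p, (j + j') mod p, (k + k') mod n)"
    unfolding Zppn_def by simp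
  have nat_mod: "nat ((s + t) mod int m) = (nat s + nat t) mod m" if "0 \<le> s" "0 \<le> t" for s t m
    using that by (simp add: nat_mod_distrib nat_add_distrib)
  have pow_mod: "x [^] nat ((s + t) mod int m) = x [^] nat s \<otimes> x [^] nat t"
    if "x \<in> carrier G" "ord x = m" "0 \<le> s" "0 \<le> t" for x s t m
  proof -
    have "x [^] nat ((s + t) mod int m) = x [^] ((nat s + nat t) mod ord x)"
      by (simp only: nat_mod[OF that(3,4)] that(2))
    also have "\<dots> = x [^] nat s \<otimes> x [^] nat t"
      using that(1) by (simp only: nat_pow_mult nat_pow_mod_ord[symmetric])
    finally show ?thesis .
  qed
  let ?A = "a [^] nat i" and ?B = "b [^] nat j" and ?C = "c [^] nat k"
  let ?A' = "a [^] nat i'" and ?B' = "b [^] nat j'" and ?C' = "c [^] nat k'"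
  have "(?A \<otimes> ?B \<otimes> ?C) \<otimes> (?A' \<otimes> ?B' \<otimes> ?C') = ?A \<otimes> (?B \<otimes> (?C \<otimes> (?A' \<otimes> (?B' \<otimes> ?C'))))"
    using abc by (simp add: m_assoc)
  also have "\<dots> = ?A \<otimes> (?A' \<otimes> (?B \<otimes> (?B' \<otimes> (?C \<otimes> ?C'))))"
    using abc nat_pow_commute[of c a] nat_pow_commute[of c b] nat_pow_commute[of b a] commute
    by (simp add: m_lcomm_if_commute[of ?C] m_lcomm_if_commute[of ?B ?A'])
  also have "\<dots> = (?A \<otimes> ?A') \<otimes> (?B \<otimes> ?B') \<otimes> (?C \<otimes> ?C')"
    using abc by (simp add: m_assoc)
  finally show "(\<lambda>(i, j, k). a [^] nat i \<otimes> b [^] nat j \<otimes> c [^] nat k) (u \<otimes>\<^bsub>K\<^esub> v) =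
    (\<lambda>(i, j, k). a [^] nat i \<otimes> b [^] nat j \<otimes> c [^] nat k) u \<otimes>
    (\<lambda>(i, j, k). a [^] nat i \<otimes> b [^] nat j \<otimes> c [^] nat k) v"
    unfolding uv prod using abc r ord_abc by (simp add: pow_mod)
qed (use abc in auto)

lemma triple_pow_n:
  fixes I J L :: nat
  shows "(a [^] I \<otimes> b [^] J \<otimes> c [^] L) [^] n = (a [^] I) [^] n \<otimes> (b [^] J) [^] n"
proof -
  have closed: "a [^] I \<in> carrier G" "b [^] J \<in> carrier G" "c [^] L \<in> carrier G"
    using abc by auto
  have c_commute: "(a [^] I \<otimes> b [^] J) \<otimes> c [^] L = c [^] L \<otimes> (a [^] I \<otimes> b [^] J)"
    using abc commute nat_pow_commute[of c a L I] nat_pow_commute[of c b L J]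
    by (simp add: m_assoc m_lcomm_if_commute[of "c [^] L"])
  have "(a [^] I \<otimes> b [^] J \<otimes> c [^] L) [^] n = (a [^] I) [^] n \<otimes> (b [^] J) [^] n \<otimes> (c [^] L) [^] n"
    using closed pow_mult_distrib[OF c_commute] pow_mult_distrib[OF nat_pow_commute[of a b I J]]
      abc commute by simp
  also have "(c [^] L) [^] n = \<one>"
    using abc ord_abc pow_eq_id[OF abc(3), of "L * n"] by (simp add: nat_pow_pow)
  finally show ?thesis
    using closed by simp
qed

lemma triple_pow_eq_one_imp_zero:
  assumes b_notin: "b \<notin> generate G {a}" and IJL: "I < p" "J < p" "L < n"
    and eq: "a [^] I \<otimes> b [^] J \<otimes> c [^] L = \<one>"
  shows "I = 0 \<and> J = 0 \<and> L = 0"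
proof -
  have closed: "a [^] I \<in> carrier G" "b [^] J \<in> carrier G" "c [^] L \<in> carrier G"
    using abc by auto
  have ab_pow: "(a [^] I) [^] n \<otimes> (b [^] J) [^] n = \<one>"
    using triple_pow_n[of I J L] eq by simp
  then have "(b [^] J) [^] n \<otimes> (a [^] I) [^] n = \<one>"
    using closed by (simp add: inv_comm)
  then have "inv ((a [^] I) [^] n) = (b [^] J) [^] n"
    by (rule inv_equality) (use closed in simp_all)
  then have "b [^] (J * n) = inv ((a [^] I) [^] n)"
    using abc by (simp add: nat_pow_pow)
  moreover have "inv ((a [^] I) [^] n) \<in> generate G {a}"
    using abc mem_generate_singleton_iff[OF finite_carrier, of a]
    by (metis generate_m_inv_closed generate.incl insert_subset nat_pow_pow empty_subsetI
        generate_pow_on_finite_carrier)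
  ultimately have b_pow: "b [^] (J * n) \<in> generate G {a}"
    by simp
  have J: "J = 0"
  proof (rule ccontr)
    assume "J \<noteq> 0"
    then have "\<not> p dvd J * n"
      using IJL not_p_dvd_n prime_p by (auto simp: prime_dvd_mult_iff dest: dvd_imp_le)
    then have "b \<in> generate G {b [^] (J * n)}"
      using mem_generate_nat_pow_prime_ord[OF finite_carrier prime_p abc(2) ord_abc(2)] by blast
    then show False
      using b_notin generate_singleton_subset[OF abc(1) b_pow] by blast
  qed
  then have "a [^] (I * n) = \<one>"
    using eq ab_pow closed abc by (simp add: nat_pow_pow)
  then have "p dvd I * n"
    using pow_eq_id[OF abc(1)] ord_abc by simp
  then have I: "I = 0"
    using IJL not_p_dvd_n prime_p by (auto simp: prime_dvd_mult_iff dest: dvd_imp_le)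
  then have "c [^] L = \<one>"
    using eq J closed by simp
  then have "L = 0"
    using pow_eq_id[OF abc(3)] ord_abc IJL by (auto dest: dvd_imp_le)
  then show ?thesis
    using I J by simp
qed

lemma iso_Zppn_if_generators:
  assumes b_notin: "b \<notin> generate G {a}"
  shows "G \<cong> K"
proof -
  define h where "h = (\<lambda>(i, j, k). a [^] nat i \<otimes> b [^] nat j \<otimes> c [^] nat k)"
  interpret h: group_hom K G h
    unfolding group_hom_def group_hom_axioms_def h_def
    using group_Zppn hom_Zppn_triple is_group by blast
  have inj: "inj_on h (carrier K)"
  proof (subst h.inj_on_one_iff, intro allI impI)
    fix u assume u: "u \<in> carrier K" and "h u = \<one>"
    moreover obtain i j k where ijk: "u = (i, j, k)"
      by (cases u)
    ultimately have nonneg: "0 \<le> i" "0 \<le> j" "0 \<le> k"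
      and bounds: "nat i < p" "nat j < p" "nat k < n"
      and "a [^] nat i \<otimes> b [^] nat j \<otimes> c [^] nat k = \<one>"
      unfolding carrier_Zppn h_def by auto
    then have "nat i = 0 \<and> nat j = 0 \<and> nat k = 0"
      by (intro triple_pow_eq_one_imp_zero[OF b_notin bounds])
    then have "i = 0" "j = 0" "k = 0"
      using nonneg by auto
    then show "u = \<one>\<^bsub>K\<^esub>"
      unfolding ijk Zppn_def by simp
  qed
  have "h ` carrier K \<subseteq> carrier G"
    using h.hom_closed by blast
  moreover have "card (h ` carrier K) = card (carrier G)"
    using card_image[OF inj] card_carrier_Zppn card_carrier by simp
  ultimately have "h ` carrier K = carrier G"
    using card_seteq[OF finite_carrier] by auto
  then have "h \<in> iso K G"
    using h.homh inj by (simp add: iso_def bij_betw_def)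
  then show ?thesis
    using group.iso_sym[OF group_Zppn] unfolding is_iso_def by blast
qed

end

end

locale Zppn_epg_profile = Zppn_order_group +
  assumes card_epg_universal: "card (epg_universal G) = n"
    and card_epg_nbhd: "x \<in> carrier G - epg_universal G \<Longrightarrow> card (epg_nbhd G x) = p * n"
begin

abbreviation N where "N \<equiv> epg_nbhd G"
abbreviation D where "D \<equiv> epg_universal G"

lemmas mem_nbhd_iff = mem_epg_nbhd_iff[OF finite_carrier]

lemma finite_nbhd: "finite (N x)"
  by (rule finite_subset[OF epg_nbhd_subset_carrier finite_carrier])

lemma finite_D: "finite D"
  by (rule finite_subset[OF epg_universal_subset_carrier finite_carrier])

lemma generate_subset_nbhd: "x \<in> carrier G \<Longrightarrow> generate G {x} \<subseteq> N x"
  using mem_nbhd_iff generate_incl generate.incl[of x "{x}"] by blast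

lemma self_mem_nbhd: "x \<in> carrier G \<Longrightarrow> x \<in> N x"
  using generate_subset_nbhd generate.incl[of x "{x}"] by blast

lemma nbhd_antimono:
  assumes w: "w \<in> carrier G" and x: "x \<in> generate G {w}"
  shows "N w \<subseteq> N x"
proof
  fix y assume "y \<in> N w"
  then obtain v where v: "v \<in> carrier G" "w \<in> generate G {v}" "y \<in> generate G {v}" "y \<in> carrier G"
    using mem_nbhd_iff[OF w] by blast
  moreover have "x \<in> generate G {v}"
    using generate_singleton_subset[OF v(1,2)] x by blast
  moreover have "x \<in> carrier G"
    using x generate_incl[of "{w}"] w by blast
  ultimately show "y \<in> N x"
    unfolding mem_nbhd_iff[OF \<open>x \<in> carrier G\<close>] by blast
qed

lemma universal_mem_nbhd: "d \<in> D \<Longrightarrow> x \<in> carrier G \<Longrightarrow> d \<in> N x"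
  using epg_nbhd_sym[of d G x] unfolding epg_universal_def by auto

lemma card_nbhd_less: "p * n < card (carrier G)"
  using card_carrier p_ge_2 n_pos by simp

lemma nbhd_common_generator:
  assumes x: "x \<in> carrier G - D" and y: "y \<in> N x"
  obtains w where "w \<in> carrier G - D" "x \<in> generate G {w}" "y \<in> generate G {w}" "N w = N x"
proof -
  obtain w where w: "w \<in> carrier G" "x \<in> generate G {w}" "y \<in> generate G {w}"
    using y x mem_nbhd_iff[of x y] by blast
  have sub: "N w \<subseteq> N x"
    using nbhd_antimono w by blast
  have "w \<notin> D"
  proof
    assume "w \<in> D"
    then have "carrier G \<subseteq> N x"
      using sub unfolding epg_universal_def by auto
    then show False
      using x epg_nbhd_subset_carrier[of G x] unfolding epg_universal_def by auto
  qed
  then have "card (N w) = card (N x)"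
    using card_epg_nbhd w(1) x by simp
  then have "N w = N x"
    using card_subset_eq[OF finite_nbhd sub] by simp
  then show ?thesis
    using that w \<open>w \<notin> D\<close> by blast
qed

lemma nbhd_eq_if_mem:
  assumes x: "x \<in> carrier G - D" and z: "z \<in> N x" "z \<notin> D"
  shows "N z = N x"
proof -
  obtain w where w: "w \<in> carrier G - D" "z \<in> generate G {w}" "N w = N x"
    using nbhd_common_generator[OF x z(1)] by blast
  have zG: "z \<in> carrier G"
    using z epg_nbhd_subset_carrier[of G] by blast
  have "N w \<subseteq> N z"
    using nbhd_antimono w by blast
  moreover have "card (N w) = card (N z)"
    using card_epg_nbhd w(1) zG z(2) by simp
  ultimately show ?thesis
    using card_subset_eq[OF finite_nbhd] w(3) by metis
qed

lemma nbhd_eq_generate: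
  assumes x: "x \<in> carrier G - D"
  obtains g where "g \<in> carrier G - D" "N x = generate G {g}" "N g = N x" "ord g = p * n"
proof -
  define S where "S = N x - D"
  have "finite S" "x \<in> S"
    unfolding S_def using finite_nbhd self_mem_nbhd x by auto
  \<comment> \<open>an element of maximal order in S generates all of N x\<close>
  then have "Max (ord ` S) \<in> ord ` S"
    by (intro Max_in) auto
  then obtain g where g: "g \<in> S" "ord g = Max (ord ` S)"
    by (metis imageE)
  then have g_max: "ord h \<le> ord g" if "h \<in> S" for h
    using that \<open>finite S\<close> by simp
  have gS: "g \<in> N x" "g \<notin> D"
    using g(1) unfolding S_def by auto
  then have gG: "g \<in> carrier G - D"
    using epg_nbhd_subset_carrier[of G x] by auto
  have Ng: "N g = N x"
    using nbhd_eq_if_mem[OF x gS] .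
  have "N x \<subseteq> generate G {g}"
  proof
    fix y assume "y \<in> N x"
    then have "y \<in> N g"
      using Ng by simp
    then obtain w where w: "w \<in> carrier G - D" "g \<in> generate G {w}" "y \<in> generate G {w}" "N w = N g"
      by (rule nbhd_common_generator[OF gG])
    have "w \<in> S"
      unfolding S_def using self_mem_nbhd w Ng by auto
    then have le: "card (generate G {w}) \<le> card (generate G {g})"
      using g_max[of w] generate_pow_card[of w] generate_pow_card[of g] w(1) gG by simp
    have sub: "generate G {g} \<subseteq> generate G {w}"
      using generate_singleton_subset w by blast
    have "finite (generate G {w})"
      using w(1) generate_incl[of "{w}"] finite_subset[OF _ finite_carrier] by blast
    then show "y \<in> generate G {g}"
      using card_seteq[OF _ sub le] w(3) by simp
  qed
  then have eq: "N x = generate G {g}"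
    using generate_subset_nbhd gG Ng by blast
  then have "ord g = p * n"
    using generate_pow_card gG card_epg_nbhd[OF x] by auto
  then show ?thesis
    using that gG eq Ng by blast
qed

lemma nbhd_Int_nbhd:
  assumes x: "x \<in> carrier G - D" and y: "y \<in> carrier G - D" and ne: "N x \<noteq> N y"
  shows "N x \<inter> N y = D"
proof
  show "N x \<inter> N y \<subseteq> D"
    using nbhd_eq_if_mem[OF x] nbhd_eq_if_mem[OF y] ne by blast
  show "D \<subseteq> N x \<inter> N y"
    using universal_mem_nbhd x y by blast
qed

text \<open>These turn out to be the maximal cyclic subgroups of G.\<close>

definition max_cyclics :: "'a set set" where
  "max_cyclics = N ` (carrier G - D)"

lemma finite_max_cyclics: "finite max_cyclics"
  unfolding max_cyclics_def using finite_carrier by simp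

lemma card_max_cyclic_diff_universal:
  assumes M: "M \<in> max_cyclics"
  shows "card (M - D) = (p - 1) * n"
proof -
  obtain x where x: "x \<in> carrier G - D" "M = N x"
    using M unfolding max_cyclics_def by blast
  then have "D \<subseteq> M"
    using universal_mem_nbhd[of _ x] by auto
  then have "card (M - D) = card M - card D"
    using card_Diff_subset[OF finite_D] by blast
  then show ?thesis
    using card_epg_nbhd[OF x(1)] card_epg_universal x(2) by (simp add: diff_mult_distrib)
qed

text \<open>The sets M - D for M in max_cyclics partition carrier G - D into blocks of size (p - 1) n.\<close>

lemma card_max_cyclics_le: "card max_cyclics \<le> p + 1"
proof -
  have card_union: "card (\<Union>M\<in>max_cyclics. M - D) = (\<Sum>M\<in>max_cyclics. card (M - D))"
  proof (rule card_UN_disjoint[OF finite_max_cyclics]; intro ballI impI)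
    show "finite (M - D)" if "M \<in> max_cyclics" for M
      using that finite_nbhd unfolding max_cyclics_def by blast
    fix M M' assume "M \<in> max_cyclics" "M' \<in> max_cyclics" "M \<noteq> M'"
    then obtain x y where "x \<in> carrier G - D" "y \<in> carrier G - D" "M = N x" "M' = N y"
      unfolding max_cyclics_def by blast
    then show "(M - D) \<inter> (M' - D) = {}"
      using nbhd_Int_nbhd[of x y] \<open>M \<noteq> M'\<close> by auto
  qed
  have "card max_cyclics * ((p - 1) * n) = card (\<Union>M\<in>max_cyclics. M - D)"
    using card_union card_max_cyclic_diff_universal by simp
  also have "\<dots> \<le> card (carrier G - D)"
    by (rule card_mono[OF finite_Diff[OF finite_carrier]])
      (use epg_nbhd_subset_carrier[of G] in \<open>auto simp: max_cyclics_def\<close>)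
  finally have "card max_cyclics * ((p - 1) * n) \<le> card (carrier G - D)" .
  moreover have "card (carrier G - D) + n = p * p * n"
    using card_Diff_subset[OF finite_D epg_universal_subset_carrier] card_carrier card_epg_universal
      card_mono[OF finite_carrier epg_universal_subset_carrier] by simp
  moreover obtain k where k: "p = Suc (Suc k)"
    using p_ge_2 by (metis add_2_eq_Suc le_Suc_ex)
  moreover have "Suc (Suc k) * Suc (Suc k) * n = Suc (Suc (Suc k)) * (Suc k * n) + n"
    by (simp add: algebra_simps)
  ultimately have "card max_cyclics * (Suc k * n) \<le> Suc (Suc (Suc k)) * (Suc k * n)"
    by simp
  moreover have "0 < Suc k * n"
    using n_pos by simp
  ultimately have "card max_cyclics \<le> Suc (Suc (Suc k))"
    using mult_le_cancel2 by blast
  then show ?thesis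
    using k by simp
qed

lemma two_max_cyclics:
  obtains x0 x1 where "x0 \<in> carrier G - D" "x1 \<in> carrier G - D" "N x0 \<noteq> N x1"
proof -
  have "n \<le> p * n"
    using p_ge_2 by simp
  then have "card D < card (carrier G)"
    using card_epg_universal card_nbhd_less by linarith
  then obtain x0 where x0: "x0 \<in> carrier G - D"
    using card_mono[OF finite_D, of "carrier G"] by force
  then obtain x1 where x1: "x1 \<in> carrier G" "x1 \<notin> N x0"
    using epg_nbhd_subset_carrier[of G x0] unfolding epg_universal_def by blast
  then have "x1 \<in> carrier G - D" "N x0 \<noteq> N x1"
    using universal_mem_nbhd x0 self_mem_nbhd by auto
  then show ?thesis
    using that x0 by blast
qed

lemma conj_set_nbhd:
  assumes x: "x \<in> carrier G" and y: "y \<in> carrier G"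
  shows "conj_set x (N y) = N (inv x \<otimes> y \<otimes> x)"
proof -
  have sub: "conj_set x (N y) \<subseteq> N (inv x \<otimes> y \<otimes> x)" if x: "x \<in> carrier G" and y: "y \<in> carrier G" for x y
  proof
    fix t assume "t \<in> conj_set x (N y)"
    then obtain z where z: "z \<in> N y" "t = inv x \<otimes> z \<otimes> x"
      unfolding conj_set_def by blast
    then obtain w where w: "w \<in> carrier G" "y \<in> generate G {w}" "z \<in> generate G {w}"
      using mem_nbhd_iff[OF y, of z] z(1) by blast
    then have "inv x \<otimes> y \<otimes> x \<in> generate G {inv x \<otimes> w \<otimes> x}" "t \<in> generate G {inv x \<otimes> w \<otimes> x}"
      using conj_set_generate[OF finite_carrier x w(1)] z(2) unfolding conj_set_def by auto
    then show "t \<in> N (inv x \<otimes> y \<otimes> x)"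
      using mem_nbhd_iff[of "inv x \<otimes> y \<otimes> x" t] x y w(1) z epg_nbhd_subset_carrier[of G y]
      by auto
  qed
  have "N (inv x \<otimes> y \<otimes> x) = conj_set x (conj_set (inv x) (N (inv x \<otimes> y \<otimes> x)))"
    using conj_set_inv'[OF x epg_nbhd_subset_carrier] by simp
  also have "\<dots> \<subseteq> conj_set x (N y)"
    using sub[of "inv x" "inv x \<otimes> y \<otimes> x"] x y
    by (simp add: m_assoc cancel_inv_left conj_set_def image_mono)
  finally show ?thesis
    using sub[OF x y] by blast
qed

lemma conj_set_mem_max_cyclics:
  assumes M: "M \<in> max_cyclics" and x: "x \<in> carrier G"
  shows "conj_set x M \<in> max_cyclics"
proof -
  obtain y where y: "y \<in> carrier G - D" "M = N y"
    using M unfolding max_cyclics_def by blast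
  have conj: "conj_set x M = N (inv x \<otimes> y \<otimes> x)"
    using conj_set_nbhd x y by simp
  have "card (N (inv x \<otimes> y \<otimes> x)) = card (conj_set x (N y))"
    using conj y(2) by simp
  also have "\<dots> = p * n"
    using card_conj_set[OF x epg_nbhd_subset_carrier] card_epg_nbhd[OF y(1)] by simp
  finally have "N (inv x \<otimes> y \<otimes> x) \<noteq> carrier G"
    using card_nbhd_less by (metis less_not_refl)
  moreover have "inv x \<otimes> y \<otimes> x \<in> carrier G"
    using x y by simp
  ultimately have "inv x \<otimes> y \<otimes> x \<in> carrier G - D"
    unfolding epg_universal_def by simp
  then show ?thesis
    unfolding max_cyclics_def conj by blast
qed

lemma max_cyclics_subset_carrier: "M \<in> max_cyclics \<Longrightarrow> M \<subseteq> carrier G"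
  unfolding max_cyclics_def using epg_nbhd_subset_carrier[of G] by blast

lemma mem_conj_class_if_card_eq_p:
  assumes M: "M \<in> max_cyclics" "M' \<in> max_cyclics"
    and card: "card (conj_class M) = p" "card (conj_class M') = p"
  shows "M' \<in> conj_class M"
proof -
  have "conj_class M \<union> conj_class M' \<subseteq> max_cyclics"
    using conj_set_mem_max_cyclics M unfolding conj_class_def by auto
  then have "card (conj_class M \<union> conj_class M') \<le> p + 1"
    using card_max_cyclics_le card_mono[OF finite_max_cyclics] le_trans by blast
  then have "conj_class M \<inter> conj_class M' \<noteq> {}"
    using card p_ge_2 card_Un_Int[of "conj_class M" "conj_class M'"] by force
  then show ?thesis
    using mem_conj_class_if_meet max_cyclics_subset_carrier M by blast
qed

context
  fixes g0 g1
  assumes g0: "g0 \<in> carrier G - D" "ord g0 = p * n" "N g0 = generate G {g0}"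
    and g1: "g1 \<in> carrier G - D" "ord g1 = p * n" "N g1 = generate G {g1}"
    and distinct: "generate G {g0} \<noteq> generate G {g1}"
begin

lemma carrier_g0_g1: "g0 \<in> carrier G" "g1 \<in> carrier G"
  using g0 g1 by auto

lemma subgroup_generate_g0_g1: "subgroup (generate G {g0}) G" "subgroup (generate G {g1}) G"
  using generate_is_subgroup carrier_g0_g1 by auto

lemma universal_eq_Int: "D = generate G {g0} \<inter> generate G {g1}"
  using nbhd_Int_nbhd[OF g0(1) g1(1)] g0(3) g1(3) distinct by simp

lemma ord_dvd_n_if_universal: "d \<in> D \<Longrightarrow> ord d dvd n"
  using ord_dvd_card_subgroup[OF finite_carrier] subgroup_Int[OF subgroup_generate_g0_g1]
    card_epg_universal universal_eq_Int by metis

lemma universal_eq_generate: "D = generate G {g0 [^] p}"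
proof -
  have c: "g0 [^] p \<in> carrier G" "ord (g0 [^] p) = n"
    using carrier_g0_g1 ord_pow[of g0 p] g0(2) prime_gt_0_nat[OF prime_p] by auto
  have "D \<subseteq> generate G {g0 [^] p}"
  proof
    fix d assume d: "d \<in> D"
    then have "d \<in> generate G {g0}" "d [^] n = \<one>"
      using universal_eq_Int ord_dvd_n_if_universal pow_eq_id epg_universal_subset_carrier[of G]
      by blast+
    then show "d \<in> generate G {g0 [^] p}"
      using mem_generate_pow_if_pow_eq_one[OF finite_carrier carrier_g0_g1(1) g0(2) n_pos] by blast
  qed
  moreover have "card (generate G {g0 [^] p}) \<le> card D"
    using generate_pow_card[OF c(1)] c(2) card_epg_universal by simp
  ultimately show ?thesis
    using card_seteq[OF finite_subset[OF generate_incl finite_carrier]] c(1) by blast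
qed

lemma universal_commute: "d \<in> D \<Longrightarrow> y \<in> carrier G \<Longrightarrow> d \<otimes> y = y \<otimes> d"
  using mem_nbhd_iff commute_in_generate_singleton[OF finite_carrier]
  unfolding epg_universal_def by blast

lemma pow_n_notin_generate: "g1 [^] n \<notin> generate G {g0}"
proof
  assume "g1 [^] n \<in> generate G {g0}"
  then have "g1 [^] n \<in> D"
    using universal_eq_Int mem_generate_singleton_iff[OF finite_carrier carrier_g0_g1(2)] by auto
  then have "ord (g1 [^] n) dvd n"
    by (rule ord_dvd_n_if_universal)
  then show False
    using ord_pow[of g1 n] g1(2) carrier_g0_g1 n_pos not_p_dvd_n by simp
qed

lemma pows_commute: "g0 [^] n \<otimes> g1 [^] n = g1 [^] n \<otimes> g0 [^] n"
proof (rule ccontr)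
  let ?a = "g0 [^] n" and ?b = "g1 [^] n"
  let ?M0 = "generate G {g0}" and ?M1 = "generate G {g1}"
  assume not_commute: "?a \<otimes> ?b \<noteq> ?b \<otimes> ?a"
  have ab: "?a \<in> carrier G" "ord ?a = p" "?b \<in> carrier G" "ord ?b = p"
    using carrier_g0_g1 ord_pow g0(2) g1(2) n_pos by auto
  have index: "card ?M0 * p = card (carrier G)" "card ?M1 * p = card (carrier G)"
    using generate_pow_card carrier_g0_g1 g0(2) g1(2) card_carrier by (simp_all add: ac_simps)
  have pow_p: "?a [^] p = \<one>" "?b [^] p = \<one>"
    using ab pow_ord_eq_1 by metis+
  \<comment> \<open>by Fermat, an element of order p normalising one of the two cyclic groups would commute\<close>
  have b_not_normal: "conj_set ?b ?M0 \<noteq> ?M0"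
    using commute_pow_if_normalises[OF finite_carrier prime_p n_pos carrier_g0_g1(1) g0(2) ab(3) pow_p(2)]
      not_commute by blast
  have a_not_normal: "conj_set ?a ?M1 \<noteq> ?M1"
    using commute_pow_if_normalises[OF finite_carrier prime_p n_pos carrier_g0_g1(2) g1(2) ab(1) pow_p(1)]
      not_commute by metis
  note C0 = conj_class_eq_conj_set_prime_pows[OF finite_carrier prime_p subgroup_generate_g0_g1(1)
      index(1) ab(3,4) b_not_normal]
  note C1 = conj_class_eq_conj_set_prime_pows[OF finite_carrier prime_p subgroup_generate_g0_g1(2)
      index(2) ab(1,2) a_not_normal]
  have "?M0 \<in> max_cyclics" "?M1 \<in> max_cyclics"
    using g0(1,3) g1(1,3) unfolding max_cyclics_def by (metis imageI)+
  then have "?M1 \<in> conj_class ?M0"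
    using C0 C1 by (intro mem_conj_class_if_card_eq_p) auto
  then have "?M1 \<in> (\<lambda>i. conj_set (?b [^] i) ?M0) ` {..<p}"
    using C0(1) by simp
  then obtain i :: nat where "?M1 = conj_set (?b [^] i) ?M0"
    by blast
  moreover have "?b [^] i = g1 [^] (n * i)"
    using carrier_g0_g1 by (simp add: nat_pow_pow)
  then have "?b [^] i \<in> ?M1"
    using mem_generate_singleton_iff[OF finite_carrier carrier_g0_g1(2)] by blast
  ultimately have "?M0 = ?M1"
    using conj_set_eq_subgroup_imp_eq[OF subgroup_generate_g0_g1(2)] generate_incl carrier_g0_g1
    by (metis empty_subsetI insert_subset)
  then show False
    using distinct by simp
qed

lemma iso_Zppn_from_max_cyclics: "G \<cong> K"
proof (rule iso_Zppn_if_generators)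
  show "g0 [^] n \<in> carrier G" "g1 [^] n \<in> carrier G" "g0 [^] p \<in> carrier G"
    using carrier_g0_g1 by auto
  show "ord (g0 [^] n) = p" "ord (g1 [^] n) = p" "ord (g0 [^] p) = n"
    using carrier_g0_g1 ord_pow g0(2) g1(2) n_pos prime_gt_0_nat[OF prime_p] by auto
  have "g0 [^] p \<in> D"
    using universal_eq_generate generate.incl[of "g0 [^] p" "{g0 [^] p}" G] by simp
  then show "g0 [^] p \<otimes> g0 [^] n = g0 [^] n \<otimes> g0 [^] p" "g0 [^] p \<otimes> g1 [^] n = g1 [^] n \<otimes> g0 [^] p"
    using universal_commute carrier_g0_g1 nat_pow_closed by blast+
  show "g0 [^] n \<otimes> g1 [^] n = g1 [^] n \<otimes> g0 [^] n"
    by (rule pows_commute)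
  show "g1 [^] n \<notin> generate G {g0 [^] n}"
    using pow_n_notin_generate generate_singleton_subset[OF carrier_g0_g1(1)]
      mem_generate_singleton_iff[OF finite_carrier carrier_g0_g1(1)] by blast
qed

end

theorem iso_Zppn: "G \<cong> K"
proof -
  obtain x0 x1 where x: "x0 \<in> carrier G - D" "x1 \<in> carrier G - D" "N x0 \<noteq> N x1"
    by (rule two_max_cyclics)
  obtain g0 where g0: "g0 \<in> carrier G - D" "N x0 = generate G {g0}" "N g0 = N x0" "ord g0 = p * n"
    using nbhd_eq_generate[OF x(1)] by blast
  obtain g1 where g1: "g1 \<in> carrier G - D" "N x1 = generate G {g1}" "N g1 = N x1" "ord g1 = p * n"
    using nbhd_eq_generate[OF x(2)] by blast
  show ?thesis
    by (rule iso_Zppn_from_max_cyclics[of g0 g1]) (use x g0 g1 in auto)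
qed

end

lemma (in Zppn_parameters) Zppn_epg_profile_if_epg_iso:
  assumes "group G" "finite (carrier G)" and iso: "epg_iso G K"
  shows "Zppn_epg_profile G p n"
proof (intro Zppn_epg_profile.intro Zppn_order_group.intro Zppn_epg_profile_axioms.intro
    Zppn_order_group_axioms.intro)
  show "card (carrier G) = p * p * n"
    using epg_iso_card_carrier[OF iso] card_carrier_Zppn by simp
  show "card (epg_universal G) = n"
    using epg_iso_card_universal[OF iso] card_epg_universal_Zppn by simp
  show "card (epg_nbhd G x) = p * n" if "x \<in> carrier G - epg_universal G" for x
    using epg_iso_card_nbhd[OF iso that] card_epg_nbhd_Zppn_non_universal by metis
qed (use assms Zppn_parameters_axioms in auto)

theorem theorem7:
  fixes G :: "('a, 'b) monoid_scheme" and p n :: nat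
  assumes "group G" and "finite (carrier G)"
    and "Factorial_Ring.prime p" and "n > 0" and "coprime n p"
  shows "epg_iso G (Zppn p n) \<longleftrightarrow> G \<cong> Zppn p n"
proof
  interpret Zppn_parameters p n
    using assms(3-5) by unfold_locales
  assume "epg_iso G (Zppn p n)"
  then interpret Zppn_epg_profile G p n
    using Zppn_epg_profile_if_epg_iso assms(1,2) by blast
  show "G \<cong> Zppn p n"
    by (rule iso_Zppn)
next
  assume "G \<cong> Zppn p n"
  then show "epg_iso G (Zppn p n)"
    using iso_imp_epg_iso[OF assms(1) group_Zppn] by blast
qed

end
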